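(* Let $E$ be a Banach lattice, $F\subseteq E$ a norm-closed, order dense ideal of $E$, and $T\in Z(E)$. Let $T_F$ denote the restriction of $T$ to $F$ (an operator on $F$). Then $\|T_F\|=\|T\|$.
   Context: $Z(E)=\{T\in\mathcal L(E):|T|\le\lambda I\text{ for some }\lambda\}$ is the center of $E$; elements of $Z(E)$ are band preserving, so $T$ maps $F$ into $F$. *)

theory Defs
  imports "HOL-Analysis.Analysis"
begin

class banach_lattice = banach + lattice +
  assumes add_left_mono_bl: "x \<le> y \<Longrightarrow> x + z \<le> y + z"
  and scale_nonneg_mono_bl: "0 \<le> x \<Longrightarrow> 0 \<le> c \<Longrightarrow> 0 \<le> c *\<^sub>R x"
  and lattice_norm: "sup x (- x) \<le> sup y (- y) \<Longrightarrow> norm x \<le> norm y"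

definition lat_abs :: "'a::banach_lattice \<Rightarrow> 'a" where
  "lat_abs x = sup x (- x)"

definition lattice_ideal :: "'a::banach_lattice set \<Rightarrow> bool" where
  "lattice_ideal F \<longleftrightarrow> 0 \<in> F \<and> (\<forall>x\<in>F. \<forall>y\<in>F. x + y \<in> F)
     \<and> (\<forall>c. \<forall>x\<in>F. c *\<^sub>R x \<in> F)
     \<and> (\<forall>x\<in>F. \<forall>y. lat_abs y \<le> lat_abs x \<longrightarrow> y \<in> F)"

definition order_dense :: "'a::banach_lattice set \<Rightarrow> bool" where
  "order_dense F \<longleftrightarrow> (\<forall>x. 0 < x \<longrightarrow> (\<exists>y\<in>F. 0 < y \<and> y \<le> x))"

text \<open>The center Z(E): bounded linear operators T with |T| \<le> \<lambda> I, i.e.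
  |T x| \<le> \<lambda> |x| for all x.\<close>
definition center :: "('a::banach_lattice \<Rightarrow> 'a) set" where
  "center = {T. bounded_linear T \<and> (\<exists>c::real. \<forall>x. lat_abs (T x) \<le> c *\<^sub>R lat_abs x)}"

definition restr_onorm :: "('a::real_normed_vector \<Rightarrow> 'b::real_normed_vector) \<Rightarrow> 'a set \<Rightarrow> real" where
  "restr_onorm T F = (SUP x\<in>F. norm (T x) / norm x)"

end

theory Submission
  imports Defs "HOL-Library.Lattice_Algebras"
begin

(* Let l be the norm of T on F, so l <= ||T||. For the converse it suffices to show |T x| <= l |x|,
   and, splitting x into positive and negative parts and passing to -T, that T a <= l a for a >= 0.
   If this fails, T a - m a has a nonzero positive part d for some m > l, and order density gives
   y in F with 0 < y <= d. A central operator acts like multiplication by a function, so T y >= m y,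
   whence l ||y|| >= ||T y|| >= m ||y||, a contradiction. The "pointwise" inequality T y >= m y is
   obtained without any representation theorem, from the fact that positive central operators
   preserve disjointness, by slicing y along the levels s a. *)

instance banach_lattice \<subseteq> lattice_ab_group_add
  by standard (metis add_left_mono_bl add.commute)

instance banach_lattice \<subseteq> ordered_real_vector
proof
  fix x y :: "'a::banach_lattice" and a :: real
  assume "x \<le> y" "0 \<le> a"
  then have "0 \<le> a *\<^sub>R (y - x)"
    by (intro scale_nonneg_mono_bl) simp_all
  then show "a *\<^sub>R x \<le> a *\<^sub>R y"
    by (simp add: scaleR_diff_right)
next
  fix x :: "'a::banach_lattice" and a b :: real
  assume "a \<le> b" "0 \<le> x"
  then have "0 \<le> (b - a) *\<^sub>R x"
    by (intro scale_nonneg_mono_bl) simp_all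
  then show "a *\<^sub>R x \<le> b *\<^sub>R x"
    by (simp add: scaleR_diff_left)
qed

lemma lat_abs_nonneg: "0 \<le> lat_abs x"
proof -
  have "x + - x \<le> lat_abs x + lat_abs x"
    unfolding lat_abs_def by (intro add_mono) simp_all
  then show ?thesis by simp
qed

lemma lat_abs_of_nonneg: "0 \<le> x \<Longrightarrow> lat_abs x = x"
  unfolding lat_abs_def by (rule sup_absorb1) (meson neg_le_0_iff_le order_trans)

lemma lat_abs_minus [simp]: "lat_abs (- x) = lat_abs x"
  unfolding lat_abs_def by (simp add: sup_commute)

lemma pprt_eq_add_pprt_minus: "pprt x = x + pprt (- x)"
  unfolding pprt_def by (simp add: add_sup_distrib_left sup_commute)

lemma pprt_diff_pprt_minus: "pprt x - pprt (- x) = x"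
  by (subst pprt_eq_add_pprt_minus) simp

lemma lat_abs_eq_pprt_add_pprt: "lat_abs x = pprt x + pprt (- x)"
proof -
  have "pprt x + pprt (- x) = sup (pprt x + - x) (pprt x)"
    unfolding pprt_def[of "- x"] by (simp add: add_sup_distrib_left)
  also have "pprt x + - x = pprt (- x)"
    by (subst pprt_eq_add_pprt_minus) simp
  also have "sup (pprt (- x)) (pprt x) = sup (lat_abs x) 0"
    unfolding pprt_def lat_abs_def by (simp add: sup_commute sup_left_commute)
  also have "\<dots> = lat_abs x"
    using lat_abs_nonneg by (rule sup_absorb1)
  finally show ?thesis ..
qed

lemma norm_mono_nonneg:
  fixes x y :: "'a::banach_lattice"
  assumes "0 \<le> x" "x \<le> y"
  shows "norm x \<le> norm y"
proof (rule lattice_norm)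
  have "sup x (- x) = x"
    using lat_abs_of_nonneg[OF assms(1)] by (simp add: lat_abs_def)
  with assms(2) show "sup x (- x) \<le> sup y (- y)"
    by (simp add: le_supI1)
qed

lemma scaleR_inf:
  fixes x y :: "'a::banach_lattice"
  assumes "0 \<le> s"
  shows "s *\<^sub>R inf x y = inf (s *\<^sub>R x) (s *\<^sub>R y)"
proof (cases "s = 0")
  case False
  with assms have s: "0 < s" by simp
  show ?thesis
  proof (rule antisym)
    show "s *\<^sub>R inf x y \<le> inf (s *\<^sub>R x) (s *\<^sub>R y)"
      using assms by (simp add: scaleR_left_mono)
    have "inverse s *\<^sub>R inf (s *\<^sub>R x) (s *\<^sub>R y) \<le> inverse s *\<^sub>R (s *\<^sub>R z)"
      if "z = x \<or> z = y" for z
      using s that by (intro scaleR_left_mono) auto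
    then have "inverse s *\<^sub>R inf (s *\<^sub>R x) (s *\<^sub>R y) \<le> inf x y"
      using s by (auto intro: le_infI)
    then have "s *\<^sub>R (inverse s *\<^sub>R inf (s *\<^sub>R x) (s *\<^sub>R y)) \<le> s *\<^sub>R inf x y"
      using s by (intro scaleR_left_mono) auto
    then show "inf (s *\<^sub>R x) (s *\<^sub>R y) \<le> s *\<^sub>R inf x y"
      using s by simp
  qed
qed simp

lemma scaleR_sup:
  fixes x y :: "'a::banach_lattice"
  assumes "0 \<le> s"
  shows "s *\<^sub>R sup x y = sup (s *\<^sub>R x) (s *\<^sub>R y)"
proof -
  have "s *\<^sub>R sup x y = - (s *\<^sub>R inf (- x) (- y))"
    by (simp only: sup_eq_neg_inf scaleR_minus_right)
  also have "\<dots> = sup (s *\<^sub>R x) (s *\<^sub>R y)"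
    using assms by (simp only: scaleR_inf scaleR_minus_right neg_inf_eq_sup minus_minus)
  finally show ?thesis .
qed

lemma lat_abs_scaleR:
  fixes x :: "'a::banach_lattice"
  assumes "0 \<le> s"
  shows "lat_abs (s *\<^sub>R x) = s *\<^sub>R lat_abs x"
  using assms by (simp add: lat_abs_def scaleR_sup)

lemma inf_add_le_add_inf:
  fixes u x y :: "'a::banach_lattice"
  assumes "0 \<le> u" "0 \<le> x" "0 \<le> y"
  shows "inf u (x + y) \<le> inf u x + inf u y"
proof -
  define m where "m = inf u (x + y)"
  have "m - inf u x = sup (m - u) (m - x)"
    by (simp add: diff_inf_eq_sup add_sup_distrib_left)
  also have "\<dots> \<le> y"
  proof (rule sup_least)
    have "m - u \<le> 0"
      by (simp add: m_def)
    then show "m - u \<le> y"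
      using assms(3) by (rule order_trans)
    show "m - x \<le> y"
      by (simp add: m_def diff_le_eq add.commute)
  qed
  finally have "m - inf u x \<le> y" .
  moreover have "m - inf u x \<le> u"
  proof -
    have "m - inf u x \<le> m"
      using assms by simp
    also have "m \<le> u"
      by (simp add: m_def)
    finally show ?thesis .
  qed
  ultimately have "m - inf u x \<le> inf u y"
    by simp
  then have "m \<le> inf u y + inf u x"
    by (simp only: diff_le_eq)
  then show ?thesis
    unfolding m_def by (simp only: add.commute)
qed

lemma inf_pprt_pprt_minus: "inf (pprt x) (pprt (- x)) = 0"
proof -
  have "inf (pprt x) (pprt (- x)) = inf x 0 + pprt (- x)"
    by (subst (1) pprt_eq_add_pprt_minus) (simp add: add_inf_distrib_right)
  also have "inf x 0 = - pprt (- x)"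
    by (simp add: pprt_neg nprt_def)
  finally show ?thesis
    by simp
qed

lemma inf_scaleR_eq_0:
  fixes x y :: "'a::banach_lattice"
  assumes "0 \<le> x" "0 \<le> y" "inf x y = 0" "0 \<le> s"
  shows "inf (s *\<^sub>R x) y = 0"
proof (rule antisym)
  define t where "t = max s 1"
  have "inf (s *\<^sub>R x) y \<le> inf (t *\<^sub>R x) (t *\<^sub>R y)"
    using assms scaleR_right_mono[of 1 t y] by (intro inf_mono scaleR_right_mono) (auto simp: t_def)
  also have "\<dots> = 0"
    using scaleR_inf[of t x y] assms(3) by (simp add: t_def)
  finally show "inf (s *\<^sub>R x) y \<le> 0" .
  show "0 \<le> inf (s *\<^sub>R x) y"
    using assms by (simp add: scaleR_nonneg_nonneg)
qed

lemma inf_eq_0_if_le: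
  fixes u x y :: "'a::banach_lattice"
  assumes "0 \<le> u" "0 \<le> x" "x \<le> y" "inf u y = 0"
  shows "inf u x = 0"
  using assms inf_mono[of u u x y] by (simp add: antisym)

lemma le_0_if_le_all_scaleR:
  fixes a x :: "'a::banach_lattice"
  assumes "0 \<le> a" "\<And>\<delta>. 0 < \<delta> \<Longrightarrow> x \<le> \<delta> *\<^sub>R a"
  shows "x \<le> 0"
proof -
  have bound: "norm (pprt x) \<le> \<delta> * norm a" if "0 < \<delta>" for \<delta>
  proof -
    have "pprt x \<le> \<delta> *\<^sub>R a"
      using assms that by (simp add: pprt_def scaleR_nonneg_nonneg)
    then have "norm (pprt x) \<le> norm (\<delta> *\<^sub>R a)"
      by (intro norm_mono_nonneg) simp_all
    with that show ?thesis
      by simp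
  qed
  have "norm (pprt x) \<le> 0 + e" if "0 < e" for e
  proof -
    have "norm (pprt x) \<le> e / (norm a + 1) * norm a"
      using that norm_ge_zero[of a] by (intro bound divide_pos_pos) linarith+
    also have "\<dots> \<le> e / (norm a + 1) * (norm a + 1)"
      using that norm_ge_zero[of a] by (intro mult_left_mono) simp_all
    also have "\<dots> = e"
      using norm_ge_zero[of a] by (simp add: add_nonneg_eq_0_iff)
    finally show ?thesis
      by simp
  qed
  then have "norm (pprt x) \<le> 0"
    by (rule field_le_epsilon)
  then show ?thesis
    by (simp add: le_zero_iff_zero_pprt)
qed

lemma inf_add_eq_0:
  fixes u x y :: "'a::banach_lattice"
  assumes "0 \<le> u" "0 \<le> x" "0 \<le> y" "inf u x = 0" "inf u y = 0"
  shows "inf u (x + y) = 0"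
proof (rule antisym)
  show "inf u (x + y) \<le> 0"
    using inf_add_le_add_inf[OF assms(1-3)] assms(4,5) by simp
  show "0 \<le> inf u (x + y)"
    using assms(1-3) by simp
qed

lemma le_if_le_add_disjoint:
  fixes u v w x :: "'a::banach_lattice"
  assumes "0 \<le> u" "0 \<le> v" "0 \<le> w" "inf u w = 0" "x \<le> u" "x \<le> v + w"
  shows "x \<le> v"
proof -
  have "x \<le> inf u (v + w)"
    using assms(5,6) by simp
  also have "\<dots> \<le> inf u v + inf u w"
    using assms(1-3) by (rule inf_add_le_add_inf)
  also have "\<dots> \<le> v"
    using assms(4) by simp
  finally show ?thesis .
qed

(* A discrete layer-cake argument: y is cut into the slices between the levels n \<delta> a, and on each
   slice z already dominates k y up to an error k \<delta> a. *)
lemma scaleR_le_if_levels_disjoint: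
  fixes a y z :: "'a::banach_lattice"
  assumes a: "0 \<le> a" and k: "0 \<le> k" and y: "0 \<le> y" "y \<le> C *\<^sub>R a" and z: "0 \<le> z"
    and levels: "\<And>s. 0 \<le> s \<Longrightarrow> inf (pprt (y - s *\<^sub>R a)) (pprt (k *\<^sub>R (s *\<^sub>R a) - z)) = 0"
  shows "k *\<^sub>R y \<le> z"
proof -
  define U where "U s = pprt (y - s *\<^sub>R a)" for s
  have U: "0 \<le> k *\<^sub>R U s" for s
    using k by (simp add: U_def scaleR_nonneg_nonneg)
  have "k *\<^sub>R y - z \<le> \<delta> *\<^sub>R (k *\<^sub>R a)" if \<delta>: "0 < \<delta>" for \<delta>
  proof -
    define g where "g = pprt (k *\<^sub>R y - \<delta> *\<^sub>R (k *\<^sub>R a) - z)"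
    have g_le: "g \<le> k *\<^sub>R U (real n * \<delta>)" for n
    proof (induction n)
      case 0
      have "0 \<le> \<delta> *\<^sub>R (k *\<^sub>R a) + z"
        using \<delta> k a z by (simp add: scaleR_nonneg_nonneg)
      then have "k *\<^sub>R y - \<delta> *\<^sub>R (k *\<^sub>R a) - z \<le> k *\<^sub>R y"
        by (simp only: diff_diff_eq diff_le_eq le_add_same_cancel1)
      moreover have "U 0 = y"
        using y(1) by (simp add: U_def pprt_def sup_absorb1)
      ultimately show ?case
        using scaleR_nonneg_nonneg[OF k y(1)] by (simp add: g_def pprt_def)
    next
      case (Suc n)
      define s where "s = real n * \<delta>"
      have "k *\<^sub>R y - \<delta> *\<^sub>R (k *\<^sub>R a) - z
          = k *\<^sub>R (y - (real (Suc n) * \<delta>) *\<^sub>R a) + (k *\<^sub>R (s *\<^sub>R a) - z)"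
        by (simp add: s_def algebra_simps)
      also have "\<dots> \<le> k *\<^sub>R U (real (Suc n) * \<delta>) + pprt (k *\<^sub>R (s *\<^sub>R a) - z)"
        using k by (intro add_mono scaleR_left_mono) (simp_all add: U_def pprt_def)
      finally have g_le_add: "g \<le> k *\<^sub>R U (real (Suc n) * \<delta>) + pprt (k *\<^sub>R (s *\<^sub>R a) - z)"
        using U by (simp add: g_def pprt_def)
      have "0 \<le> s"
        using \<delta> by (simp add: s_def)
      then have "inf (U s) (pprt (k *\<^sub>R (s *\<^sub>R a) - z)) = 0"
        unfolding U_def by (rule levels)
      then have "inf (k *\<^sub>R U s) (pprt (k *\<^sub>R (s *\<^sub>R a) - z)) = 0"
        using k by (intro inf_scaleR_eq_0) (simp_all add: U_def)
      from U U zero_le_pprt this Suc.IH[folded s_def] g_le_add show ?case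
        by (rule le_if_le_add_disjoint)
    qed
    obtain N :: nat where "C / \<delta> \<le> real N"
      using real_arch_simple by blast
    with \<delta> have "C \<le> real N * \<delta>"
      by (simp add: divide_le_eq)
    with a y(2) have "y \<le> (real N * \<delta>) *\<^sub>R a"
      by (meson order_trans scaleR_right_mono)
    then have "U (real N * \<delta>) = 0"
      by (simp add: U_def pprt_def sup_absorb2)
    with g_le[of N] have "g \<le> 0"
      by simp
    then show ?thesis
      by (simp add: g_def pprt_def diff_le_eq add.commute)
  qed
  then have "k *\<^sub>R y - z \<le> 0"
    using scaleR_nonneg_nonneg[OF k a] by (intro le_0_if_le_all_scaleR)
  then show ?thesis
    by simp
qed

locale positive_central =
  fixes P :: "'a::banach_lattice \<Rightarrow> 'a" and c :: real
  assumes linear_P: "linear P"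
    and nonneg_P: "0 \<le> u \<Longrightarrow> 0 \<le> P u"
    and le_scaleR: "0 \<le> u \<Longrightarrow> P u \<le> c *\<^sub>R u"
    and nonneg_c: "0 \<le> c"
begin

lemma inf_apply_eq_0:
  assumes "0 \<le> x" "0 \<le> u" "inf x u = 0"
  shows "inf (P x) u = 0"
proof (rule antisym)
  have "inf (P x) u \<le> inf (c *\<^sub>R x) u"
    using le_scaleR[OF assms(1)] by (rule inf_mono) simp
  also have "\<dots> = 0"
    using assms nonneg_c by (rule inf_scaleR_eq_0)
  finally show "inf (P x) u \<le> 0" .
  show "0 \<le> inf (P x) u"
    using nonneg_P[OF assms(1)] assms(2) by simp
qed

(* Where y exceeds s a, P y dominates k s a: the part of y above s a is disjoint both from
   pprt (k a - P a) and from P (pprt (s a - y)). *)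
lemma pprt_above_level_disjoint:
  assumes a: "0 \<le> a" and y: "0 \<le> y" and e_y: "inf (pprt (k *\<^sub>R a - P a)) y = 0"
    and s: "0 \<le> s"
  shows "inf (pprt (y - s *\<^sub>R a)) (pprt (k *\<^sub>R (s *\<^sub>R a) - P y)) = 0"
proof -
  define e where "e = pprt (k *\<^sub>R a - P a)"
  define U where "U = pprt (y - s *\<^sub>R a)"
  define L where "L = pprt (s *\<^sub>R a - y)"
  have e: "0 \<le> e" and U: "0 \<le> U" and L: "0 \<le> L"
    by (simp_all add: e_def U_def L_def)
  have "s *\<^sub>R a - y = L - U"
    using pprt_diff_pprt_minus[of "s *\<^sub>R a - y"] by (simp add: L_def U_def)
  then have "P (s *\<^sub>R a) - P y = P L - P U"
    using linear_diff[OF linear_P] by metis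
  then have "k *\<^sub>R (s *\<^sub>R a) - P y = s *\<^sub>R (k *\<^sub>R a - P a) + P L - P U"
    using linear_scale[OF linear_P] by (simp add: algebra_simps)
  also have "\<dots> \<le> s *\<^sub>R e + P L - 0"
    using s nonneg_P[OF U] by (intro diff_mono add_mono scaleR_left_mono)
      (simp_all add: e_def pprt_def)
  finally have B_le: "pprt (k *\<^sub>R (s *\<^sub>R a) - P y) \<le> s *\<^sub>R e + P L"
    using scaleR_nonneg_nonneg[OF s e] nonneg_P[OF L] by (simp add: pprt_def)
  have "inf U (s *\<^sub>R e) = 0"
  proof -
    have "U \<le> y"
      using y scaleR_nonneg_nonneg[OF s a] by (simp add: U_def pprt_def)
    from e U this e_y have "inf e U = 0"
      unfolding e_def by (rule inf_eq_0_if_le)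
    then have "inf (s *\<^sub>R e) U = 0"
      using e U s by (intro inf_scaleR_eq_0)
    then show ?thesis
      by (simp add: inf.commute)
  qed
  moreover have "inf U (P L) = 0"
  proof -
    have "inf L U = 0"
      using inf_pprt_pprt_minus[of "s *\<^sub>R a - y"] by (simp add: L_def U_def)
    then have "inf (P L) U = 0"
      using L U by (intro inf_apply_eq_0)
    then show ?thesis
      by (simp add: inf.commute)
  qed
  ultimately have "inf U (s *\<^sub>R e + P L) = 0"
    using U scaleR_nonneg_nonneg[OF s e] nonneg_P[OF L] by (intro inf_add_eq_0)
  then show ?thesis
    unfolding U_def[symmetric] by (rule inf_eq_0_if_le[OF U zero_le_pprt B_le])
qed

lemma scaleR_le_apply_if_le_pprt:
  assumes a: "0 \<le> a" and k: "0 \<le> k" and y: "0 \<le> y" "y \<le> pprt (P a - k *\<^sub>R a)"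
  shows "k *\<^sub>R y \<le> P y"
proof -
  have "inf (pprt (k *\<^sub>R a - P a)) (pprt (P a - k *\<^sub>R a)) = 0"
    using inf_pprt_pprt_minus[of "k *\<^sub>R a - P a"] by simp
  with zero_le_pprt y have e_y: "inf (pprt (k *\<^sub>R a - P a)) y = 0"
    by (rule inf_eq_0_if_le)
  have "pprt (P a - k *\<^sub>R a) \<le> P a"
    using nonneg_P[OF a] scaleR_nonneg_nonneg[OF k a] by (simp add: pprt_def)
  with y le_scaleR[OF a] have "y \<le> c *\<^sub>R a"
    by order
  with a k y(1) show ?thesis
  proof (rule scaleR_le_if_levels_disjoint)
    show "0 \<le> P y"
      using y(1) by (rule nonneg_P)
    show "inf (pprt (y - s *\<^sub>R a)) (pprt (k *\<^sub>R (s *\<^sub>R a) - P y)) = 0" if "0 \<le> s" for s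
      using a y(1) e_y that by (rule pprt_above_level_disjoint)
  qed
qed

end

lemma center_boundE:
  assumes "T \<in> center"
  obtains c where "0 \<le> c" "\<And>x. lat_abs (T x) \<le> c *\<^sub>R lat_abs x"
proof -
  obtain c where c: "\<And>x. lat_abs (T x) \<le> c *\<^sub>R lat_abs x"
    using assms by (auto simp: center_def)
  have "lat_abs (T x) \<le> max c 0 *\<^sub>R lat_abs x" for x
    using c[of x] scaleR_right_mono[OF max.cobounded1 lat_abs_nonneg] by (rule order_trans)
  then show ?thesis
    using that[of "max c 0"] by simp
qed

lemma center_uminus:
  assumes "T \<in> center"
  shows "(\<lambda>x. - T x) \<in> center"
  using assms bounded_linear_minus by (auto simp: center_def)

lemma positive_central_add_scaleR:
  assumes "linear S" "0 \<le> c" "\<And>x. lat_abs (S x) \<le> c *\<^sub>R lat_abs x"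
  shows "positive_central (\<lambda>u. S u + c *\<^sub>R u) (2 * c)"
proof
  fix u :: 'a
  assume "0 \<le> u"
  then have "lat_abs (S u) \<le> c *\<^sub>R u"
    using assms(3)[of u] by (simp add: lat_abs_of_nonneg)
  then have upper: "S u \<le> c *\<^sub>R u" and lower: "- S u \<le> c *\<^sub>R u"
    by (simp_all add: lat_abs_def)
  show "0 \<le> S u + c *\<^sub>R u"
    using add_right_mono[OF lower, of "S u"] by (simp only: left_minus add.commute[of "c *\<^sub>R u"])
  show "S u + c *\<^sub>R u \<le> (2 * c) *\<^sub>R u"
    using add_right_mono[OF upper, of "c *\<^sub>R u"] by (simp only: mult_2 scaleR_left_distrib)
qed (use assms(1,2) in \<open>simp_all add: linear_add linear_scale algebra_simps\<close>)

lemma center_le_scaleR_if_bounded_on_order_dense: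
  assumes S: "S \<in> center" and F: "order_dense F"
    and bound: "\<And>y. y \<in> F \<Longrightarrow> norm (S y) \<le> l * norm y"
    and l: "0 \<le> l" and a: "0 \<le> a"
  shows "S a \<le> l *\<^sub>R a"
proof (rule ccontr)
  assume "\<not> S a \<le> l *\<^sub>R a"
  then obtain \<delta> where \<delta>: "0 < \<delta>" and not_le: "\<not> S a - l *\<^sub>R a \<le> \<delta> *\<^sub>R a"
    using le_0_if_le_all_scaleR[OF a, of "S a - l *\<^sub>R a"] by auto
  define m where "m = l + \<delta>"
  have "S a - m *\<^sub>R a = (S a - l *\<^sub>R a) - \<delta> *\<^sub>R a"
    by (simp add: m_def scaleR_left_distrib)
  with not_le have "\<not> S a - m *\<^sub>R a \<le> 0"
    by (metis diff_le_0_iff_le)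
  then have "pprt (S a - m *\<^sub>R a) \<noteq> 0"
    by (simp add: le_zero_iff_zero_pprt)
  then have "0 < pprt (S a - m *\<^sub>R a)"
    by (simp add: order.not_eq_order_implies_strict)
  then obtain y where y: "y \<in> F" "0 < y" "y \<le> pprt (S a - m *\<^sub>R a)"
    using F by (auto simp: order_dense_def)
  obtain c where c: "0 \<le> c" "\<And>x. lat_abs (S x) \<le> c *\<^sub>R lat_abs x"
    using center_boundE[OF S] by blast
  have "linear S"
    using S by (simp add: center_def bounded_linear.linear)
  then interpret P: positive_central "\<lambda>u. S u + c *\<^sub>R u" "2 * c"
    using c by (rule positive_central_add_scaleR)
  have shift: "(S a + c *\<^sub>R a) - (c + m) *\<^sub>R a = S a - m *\<^sub>R a"
    by (simp add: algebra_simps)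
  have "y \<le> pprt ((S a + c *\<^sub>R a) - (c + m) *\<^sub>R a)"
    unfolding shift by (rule y(3))
  moreover have "0 \<le> c + m"
    using c(1) l \<delta> by (simp add: m_def)
  ultimately have "(c + m) *\<^sub>R y \<le> S y + c *\<^sub>R y"
    using a less_imp_le[OF y(2)] by (intro P.scaleR_le_apply_if_le_pprt)
  then have "m *\<^sub>R y \<le> S y"
    by (simp add: algebra_simps)
  then have "norm (m *\<^sub>R y) \<le> norm (S y)"
    using l \<delta> y(2) by (intro norm_mono_nonneg scaleR_nonneg_nonneg) (simp_all add: m_def)
  also have "\<dots> \<le> l * norm y"
    using y(1) by (rule bound)
  finally have "m * norm y \<le> l * norm y"
    using l \<delta> by (simp add: m_def)
  moreover have "0 < norm y"
    using y(2) by auto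
  ultimately show False
    using \<delta> by (simp add: m_def)
qed

lemma center_norm_le_if_bounded_on_order_dense:
  assumes S: "S \<in> center" and F: "order_dense F"
    and bound: "\<And>y. y \<in> F \<Longrightarrow> norm (S y) \<le> l * norm y" and l: "0 \<le> l"
  shows "norm (S x) \<le> l * norm x"
proof -
  have upper: "S a \<le> l *\<^sub>R a" if "0 \<le> a" for a
    using S F bound l that by (rule center_le_scaleR_if_bounded_on_order_dense)
  have lower: "- S a \<le> l *\<^sub>R a" if "0 \<le> a" for a
    using center_uminus[OF S] F _ l that
    by (rule center_le_scaleR_if_bounded_on_order_dense) (simp add: bound)
  have "linear S"
    using S by (simp add: center_def bounded_linear.linear)
  then have S_x: "S x = S (pprt x) - S (pprt (- x))"
    by (simp add: pprt_diff_pprt_minus flip: linear_diff)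
  have "S x \<le> l *\<^sub>R pprt x + l *\<^sub>R pprt (- x)"
    unfolding S_x diff_conv_add_uminus by (intro add_mono upper lower) simp_all
  moreover have "- S x \<le> l *\<^sub>R pprt x + l *\<^sub>R pprt (- x)"
  proof -
    have "- S x = - S (pprt x) + S (pprt (- x))"
      unfolding S_x by simp
    also have "\<dots> \<le> l *\<^sub>R pprt x + l *\<^sub>R pprt (- x)"
      by (intro add_mono upper lower) simp_all
    finally show ?thesis .
  qed
  ultimately have "lat_abs (S x) \<le> l *\<^sub>R pprt x + l *\<^sub>R pprt (- x)"
    unfolding lat_abs_def by (rule sup_least)
  also have "\<dots> = lat_abs (l *\<^sub>R x)"
    by (simp only: lat_abs_scaleR[OF l] lat_abs_eq_pprt_add_pprt[of x] scaleR_add_right)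
  finally have "lat_abs (S x) \<le> lat_abs (l *\<^sub>R x)" .
  then have "norm (S x) \<le> norm (l *\<^sub>R x)"
    unfolding lat_abs_def by (rule lattice_norm)
  with l show ?thesis
    by simp
qed

theorem mainTheorem7:
  fixes F :: "'a::banach_lattice set" and T :: "'a \<Rightarrow> 'a"
  assumes "closed F" and "lattice_ideal F" and "order_dense F"
    and "T \<in> center"
  shows "restr_onorm T F = onorm T"
proof -
  have T: "bounded_linear T"
    using assms(4) by (simp add: center_def)
  have "0 \<in> F"
    using assms(2) by (simp add: lattice_ideal_def)
  have bdd: "bdd_above ((\<lambda>x. norm (T x) / norm x) ` F)"
    using le_onorm[OF T] by (intro bdd_aboveI2)
  define l where "l = restr_onorm T F"
  have ratio_le: "norm (T y) / norm y \<le> l" if "y \<in> F" for y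
    unfolding l_def restr_onorm_def using bdd that by (rule cSUP_upper2) simp
  then have "0 \<le> l"
    using \<open>0 \<in> F\<close> by force
  have "norm (T y) \<le> l * norm y" if "y \<in> F" for y
    using ratio_le[OF that] by (cases "y = 0") (simp_all add: linear_simps(3)[OF T] pos_divide_le_eq)
  then have "onorm T \<le> l"
    using \<open>0 \<le> l\<close> center_norm_le_if_bounded_on_order_dense[OF assms(4,3)]
    by (intro onorm_bound) blast+
  moreover have "l \<le> onorm T"
    unfolding l_def restr_onorm_def using \<open>0 \<in> F\<close> le_onorm[OF T] by (intro cSUP_least) auto
  ultimately show ?thesis
    by (simp add: l_def)
qed

end
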